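(* Let $p$ be a prime and $\sigma:\mathcal A_m\to\mathcal A_m^*$ a $p$-uniform morphism. For every $n\in\mathbb{N}$, $$R_{n+1}(T)=M_\sigma(T^{p^n})R_n(T),$$ where $R_n(T)$ is the column vector $(P_{\sigma^n(0)}(T),\dots,P_{\sigma^n(m-1)}(T))^{\mathsf T}$.
   Context: $\mathcal A_m=\{0,\dots,m-1\}$, letters viewed in $\mathbb{F}_p$. For $W=w_0\cdots w_{r-1}$, $P_W(T)=\sum_{j=0}^{r-1}w_{r-1-j}T^j$, and $\beta_{W,j}(T)=\sum_{i:\,w_i=j}T^{r-1-i}\in\mathbb{F}_p[T]$ (zero if $j$ does not occur). The matrix associated with $\sigma$ is the $m\times m$ matrix $M_\sigma(T)=(\beta_{\sigma(i),j}(T))_{0\le i,j\le m-1}$ with entries in $\mathbb{F}_p[T]$. A $p$-uniform morphism sends each letter to a word of length $p$. *)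

theory Defs
  imports "HOL-Computational_Algebra.Polynomial" "Berlekamp_Zassenhaus.Finite_Field"
begin

text \<open>Words over A_m are lists of naturals; letters are viewed in F_p = 'p mod_ring.\<close>

definition P_word :: "nat list \<Rightarrow> 'p::prime_card mod_ring poly" where
  "P_word W = (\<Sum>j<length W. monom (of_nat (W ! (length W - 1 - j))) j)"

definition beta_word :: "nat list \<Rightarrow> nat \<Rightarrow> 'p::prime_card mod_ring poly" where
  "beta_word W j = (\<Sum>i\<in>{i. i < length W \<and> W ! i = j}. monom 1 (length W - 1 - i))"

definition morph_word :: "(nat \<Rightarrow> nat list) \<Rightarrow> nat list \<Rightarrow> nat list" where
  "morph_word \<sigma> w = concat (map \<sigma> w)"

definition morph_iter :: "(nat \<Rightarrow> nat list) \<Rightarrow> nat \<Rightarrow> nat \<Rightarrow> nat list" where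
  "morph_iter \<sigma> n a = (morph_word \<sigma> ^^ n) [a]"

definition uniform_morphism :: "nat \<Rightarrow> nat \<Rightarrow> (nat \<Rightarrow> nat list) \<Rightarrow> bool" where
  "uniform_morphism m k \<sigma> \<longleftrightarrow> (\<forall>a<m. length (\<sigma> a) = k \<and> set (\<sigma> a) \<subseteq> {..<m})"

text \<open>Matrix M_sigma(T), entry (i,j), and evaluation at T^(p^n) via composition.\<close>
definition M_sigma :: "(nat \<Rightarrow> nat list) \<Rightarrow> nat \<Rightarrow> nat \<Rightarrow> 'p::prime_card mod_ring poly" where
  "M_sigma \<sigma> i j = beta_word (\<sigma> i) j"

definition R_vec :: "(nat \<Rightarrow> nat list) \<Rightarrow> nat \<Rightarrow> nat \<Rightarrow> 'p::prime_card mod_ring poly" where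
  "R_vec \<sigma> n i = P_word (morph_iter \<sigma> n i)"

end

theory Submission
  imports Defs
begin

text \<open>Both P_W and beta_{W,j} satisfy a Horner recursion in the first letter of W. Hence, if
  W = F(w_0) ... F(w_{r-1}) is a concatenation of blocks of common length L, the block F(w_k)
  contributes P_{F(w_k)}(T) T^(L(r-1-k)), and grouping these terms by letter gives
  P_W = sum_j beta_{w,j}(T^L) P_{F(j)}. Since sigma^(n+1)(i) is the concatenation of the blocks
  sigma^n(a), a running through sigma(i), each of length p^n, this is the matrix identity.\<close>

lemma P_word_Cons: "P_word (x # xs) = monom (of_nat x) (length xs) + P_word xs"
proof -
  have "P_word (x # xs) =
      (\<Sum>j<length xs. monom (of_nat ((x # xs) ! (length xs - j))) j) + monom (of_nat x) (length xs)"
    by (simp add: P_word_def)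
  also have "(\<Sum>j<length xs. monom (of_nat ((x # xs) ! (length xs - j))) j) = P_word xs"
    unfolding P_word_def
  proof (rule sum.cong)
    fix j assume "j \<in> {..<length xs}"
    then have "length xs - j = Suc (length xs - 1 - j)" by auto
    then show "monom (of_nat ((x # xs) ! (length xs - j))) j
             = monom (of_nat (xs ! (length xs - 1 - j))) j"
      by simp
  qed simp
  finally show ?thesis by (simp add: add.commute)
qed

lemma P_word_append: "P_word (u @ v) = P_word u * monom 1 (length v) + P_word v"
  by (induction u) (simp_all add: P_word_def P_word_Cons mult_monom algebra_simps)

lemma beta_word_Nil: "beta_word [] j = 0"
  by (simp add: beta_word_def)

lemma beta_word_Cons:
  "beta_word (x # xs) j = (if x = j then monom 1 (length xs) else 0) + beta_word xs j"
proof -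
  have beta_word_as_sum:
    "beta_word W j = (\<Sum>i<length W. if W ! i = j then monom 1 (length W - 1 - i) else 0)"
    for W :: "nat list"
    unfolding beta_word_def by (simp add: sum.inter_filter[symmetric] lessThan_def)
  show ?thesis
    unfolding beta_word_as_sum
    by (simp add: sum.lessThan_Suc_shift del: sum.lessThan_Suc) (rule sum.cong; simp)
qed

lemma monom_one_pcompose: "monom 1 k \<circ>\<^sub>p q = q ^ k"
  by (induction k) (simp_all add: monom_Suc pcompose_pCons monom_0 pcompose_const)

lemma P_word_concat_map:
  fixes F :: "nat \<Rightarrow> nat list"
  assumes "\<forall>x\<in>set w. length (F x) = L" and "set w \<subseteq> A" and "finite A"
  shows "(P_word (concat (map F w)) :: 'p::prime_card mod_ring poly)
       = (\<Sum>j\<in>A. (beta_word w j \<circ>\<^sub>p monom 1 L) * P_word (F j))"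
  using assms(1,2)
proof (induction w)
  case Nil
  then show ?case by (simp add: P_word_def beta_word_Nil)
next
  case (Cons x w)
  have "length (concat (map F w)) = L * length w"
    using Cons.prems(1) by (induction w) auto
  then have "(P_word (concat (map F (x # w))) :: 'p mod_ring poly)
      = (monom 1 (length w) \<circ>\<^sub>p monom 1 L) * P_word (F x) + P_word (concat (map F w))"
    by (simp add: P_word_append monom_one_pcompose monom_power mult.commute)
  with Cons show ?case
    using \<open>finite A\<close>
    by (simp add: beta_word_Cons pcompose_add distrib_right sum.distrib
        if_distrib[of "\<lambda>q. q \<circ>\<^sub>p _"] if_distrib[of "\<lambda>q. q * _"] cong: if_cong)
qed

lemma morph_word_funpow_append:
  "(morph_word \<sigma> ^^ n) (u @ v) = (morph_word \<sigma> ^^ n) u @ (morph_word \<sigma> ^^ n) v"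
  by (induction n arbitrary: u v) (simp_all add: morph_word_def)

lemma morph_word_funpow_eq_concat:
  "(morph_word \<sigma> ^^ n) w = concat (map (morph_iter \<sigma> n) w)"
proof (induction w)
  case Nil
  show ?case by (induction n) (simp_all add: morph_word_def)
next
  case (Cons a w)
  then show ?case
    using morph_word_funpow_append[where u = "[a]" and v = w] by (simp add: morph_iter_def)
qed

lemma morph_iter_Suc: "morph_iter \<sigma> (Suc n) a = concat (map (morph_iter \<sigma> n) (\<sigma> a))"
  by (simp add: morph_iter_def funpow_Suc_right morph_word_def morph_word_funpow_eq_concat
      del: funpow.simps)

lemma uniform_morphism_morph_iter:
  assumes "uniform_morphism m k \<sigma>" and "a < m"
  shows "length (morph_iter \<sigma> n a) = k ^ n \<and> set (morph_iter \<sigma> n a) \<subseteq> {..<m}"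
  using assms(2)
proof (induction n arbitrary: a)
  case 0
  then show ?case by (simp add: morph_iter_def)
next
  case (Suc n)
  have letters: "set (\<sigma> a) \<subseteq> {..<m}" and "length (\<sigma> a) = k"
    using assms(1) Suc.prems by (auto simp: uniform_morphism_def)
  moreover have "\<forall>b\<in>set (\<sigma> a).
      length (morph_iter \<sigma> n b) = k ^ n \<and> set (morph_iter \<sigma> n b) \<subseteq> {..<m}"
    using letters Suc.IH by blast
  ultimately show ?case
    by (simp add: morph_iter_Suc length_concat sum_list_triv cong: map_cong) blast
qed

theorem lemma4p9:
  fixes \<sigma> :: "nat \<Rightarrow> nat list" and m n :: nat
  assumes "uniform_morphism m CARD('p::prime_card) \<sigma>"
  shows "\<forall>i<m. (R_vec \<sigma> (Suc n) i :: 'p mod_ring poly) =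
           (\<Sum>j<m. pcompose (M_sigma \<sigma> i j) (monom 1 (CARD('p) ^ n)) * R_vec \<sigma> n j)"
proof (intro allI impI)
  fix i assume "i < m"
  then have letters: "set (\<sigma> i) \<subseteq> {..<m}"
    using assms by (simp add: uniform_morphism_def)
  then have "\<forall>a\<in>set (\<sigma> i). length (morph_iter \<sigma> n a) = CARD('p) ^ n"
    using uniform_morphism_morph_iter[OF assms] by blast
  from P_word_concat_map[OF this letters finite_lessThan]
  show "(R_vec \<sigma> (Suc n) i :: 'p mod_ring poly) =
          (\<Sum>j<m. pcompose (M_sigma \<sigma> i j) (monom 1 (CARD('p) ^ n)) * R_vec \<sigma> n j)"
    by (simp add: R_vec_def M_sigma_def morph_iter_Suc)
qed

end
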